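(* Let $f\colon[0,\infty)\to\mathbb{R}$ be continuous and suppose there are $c\in\mathbb R$, $\epsilon>0$ with $f(\zeta)-c/\zeta=O(\zeta^{-1-\epsilon})$ as $\zeta\to\infty$, and let $F(z)=\int_0^\infty f(\zeta)\zeta^{-z}\,d\zeta$ (absolutely convergent for $0<\operatorname{Re} z<1$). Fix an integer $N\ge1$ and $z\in\mathbb C$ with $0<\operatorname{Re}z<1/N$. For $s>0$ define complex numbers $\phi_s(w)$ for all rooted forests $w$ with $|w|\le N$ recursively by $\phi_s(\mathbb 1)=1$, $\phi_s(w w')=\phi_s(w)\phi_s(w')$, and $$\phi_s(B_+(w))=\int_0^\infty f(\zeta)\,(s\zeta)^{-z}\,\phi_{s\zeta}(w)\,d\zeta .$$ Then all these integrals converge and for every forest $w$ with $|w|\le N$ and every $s>0$, $$\phi_s(w)=s^{-z|w|}\prod_{v\in V(w)}F\big(z\,|w_v|\big).$$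
   Context: Rooted forests, $|w|$ (number of nodes), $V(w)$ (set of nodes), $\mathbb 1$ (empty forest), product of forests = disjoint union, $B_+$ (grafting all trees of a forest onto a new root), and $w_v$ (the subtree of $w$ rooted at node $v$, consisting of $v$ and its descendants) are as in the Connes–Kreimer Hopf algebra of rooted trees. *)

theory Defs
  imports "HOL-Analysis.Analysis" "HOL-Library.Landau_Symbols" "HOL-Library.Multiset"
begin

text \<open>Rooted trees: a node together with the (unordered, but listed) forest of its children.
  A rooted forest is a list of rooted trees; the product of forests is concatenation
  (disjoint union), the empty forest is the empty list, and B_+ of a forest ts is Node ts.\<close>
datatype rtree = Node "rtree list"

fun tree_size :: "rtree \<Rightarrow> nat" where
  "tree_size (Node ts) = Suc (sum_list (map tree_size ts))"

definition forest_size :: "rtree list \<Rightarrow> nat" where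
  "forest_size w = sum_list (map tree_size w)"

fun node_subtrees :: "rtree \<Rightarrow> rtree multiset" where
  "node_subtrees (Node ts) = add_mset (Node ts) (sum_list (map node_subtrees ts))"

definition forest_node_subtrees :: "rtree list \<Rightarrow> rtree multiset" where
  "forest_node_subtrees w = sum_list (map node_subtrees w)"

definition mellinF :: "(real \<Rightarrow> real) \<Rightarrow> complex \<Rightarrow> complex" where
  "mellinF f z = (LINT \<zeta>:{0<..}|lborel. complex_of_real (f \<zeta>) * (complex_of_real \<zeta>) powr (-z))"

fun phi_tree :: "(real \<Rightarrow> real) \<Rightarrow> complex \<Rightarrow> rtree \<Rightarrow> real \<Rightarrow> complex" where
  "phi_tree f z (Node ts) s =
     (LINT \<zeta>:{0<..}|lborel. complex_of_real (f \<zeta>) * (complex_of_real (s * \<zeta>)) powr (-z)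
        * prod_list (map (\<lambda>t. phi_tree f z t (s * \<zeta>)) ts))"

definition phi_forest :: "(real \<Rightarrow> real) \<Rightarrow> complex \<Rightarrow> rtree list \<Rightarrow> real \<Rightarrow> complex" where
  "phi_forest f z w s = prod_list (map (\<lambda>t. phi_tree f z t s) w)"

end

theory Submission imports Defs begin

(* The closed formula is proved by structural induction on trees.  If the
   formula holds for a forest ts of size m, i.e. phi_r(ts) = r^(-z m) P, then the integrand
   defining phi_s(B_+ ts) factors as

     f(t) (s t)^(-z) phi_(s t)(ts) = s^(-z (m+1)) P * f(t) t^(-z (m+1)),

   so phi_s(B_+ ts) = s^(-z (m+1)) P F(z (m+1)); products over forests are then immediate.
   Convergence of the integrals reduces, by the same factorisation, to convergence of the
   Mellin integral F(w) for 0 < Re w < 1, which is the analytic part of the file: near 0 the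
   integrand is bounded by B t^(-Re w) (continuity of f on a compact interval), near infinity
   by K t^(-1 - Re w) (the decay hypothesis gives |f t| <= K / t).  The hypothesis
   |B_+ ts| <= N together with Re z < 1/N guarantees Re (z |B_+ ts|) < 1. *)

text \<open>Lebesgue integrability with Borel measurability gives integrability w.r.t. lborel;
  the library's integrability criteria for powers are stated for lebesgue.\<close>
lemma set_integrable_lborel_from_lebesgue:
  fixes g :: "real \<Rightarrow> 'b::{banach, second_countable_topology}"
  assumes "set_integrable lebesgue A g" "set_borel_measurable lborel A g"
  shows "set_integrable lborel A g"
  using assms unfolding set_integrable_def set_borel_measurable_def
  by (simp add: integrable_completion)

lemma powr_set_integrable_near_zero:
  assumes "r > -1" "M \<ge> 0"
  shows "set_integrable lborel {0<..M} (\<lambda>x::real. x powr r)"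
proof (rule set_integrable_lborel_from_lebesgue)
  show "set_integrable lebesgue {0<..M} (\<lambda>x. x powr r)"
    by (rule nonnegative_absolutely_integrable_1) (use integrable_on_powr_from_0' assms in auto)
  show "set_borel_measurable lborel {0<..M} (\<lambda>x. x powr r)"
    unfolding set_borel_measurable_def by measurable
qed

lemma powr_set_integrable_at_infinity:
  assumes "r < -1" "M > 0"
  shows "set_integrable lborel {M..} (\<lambda>x::real. x powr r)"
proof (rule set_integrable_lborel_from_lebesgue)
  show "set_integrable lebesgue {M..} (\<lambda>x. x powr r)"
    by (rule nonnegative_absolutely_integrable_1)
       (use has_integral_powr_to_inf[OF assms] in \<open>auto simp: integrable_on_def\<close>)
  show "set_borel_measurable lborel {M..} (\<lambda>x. x powr r)"
    unfolding set_borel_measurable_def by measurable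
qed

lemma mellin_integrand_measurable:
  assumes cont: "continuous_on {0<..} f" and A: "A \<subseteq> {0<..}" "A \<in> sets borel"
  shows "set_borel_measurable lborel A
           (\<lambda>\<zeta>::real. complex_of_real (f \<zeta>) * complex_of_real \<zeta> powr (-w))"
proof -
  have "continuous_on {0<..} (\<lambda>\<zeta>::real. complex_of_real (f \<zeta>) * complex_of_real \<zeta> powr (-w))"
    using cont by (intro continuous_intros) auto
  then show ?thesis
    unfolding set_borel_measurable_def measurable_lborel2
    by (intro borel_measurable_continuous_on_indicator[OF A(2)] continuous_on_subset[OF _ A(1)])
qed

lemma norm_mellin_integrand:
  assumes "\<zeta> > 0"
  shows "norm (complex_of_real (f \<zeta>) * complex_of_real \<zeta> powr (-w)) = \<bar>f \<zeta>\<bar> * \<zeta> powr (- Re w)"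
  using assms by (simp add: norm_mult norm_powr_real_powr)

lemma reciprocal_bound_from_asymptotics:
  fixes f :: "real \<Rightarrow> real"
  assumes eps: "\<epsilon> \<ge> 0"
    and asym: "(\<lambda>\<zeta>. f \<zeta> - c / \<zeta>) \<in> O[at_top](\<lambda>\<zeta>. \<zeta> powr (-1 - \<epsilon>))"
  obtains K M where "M \<ge> 1" "\<And>x. x \<ge> M \<Longrightarrow> \<bar>f x\<bar> \<le> K / x"
proof -
  obtain C where C: "C > 0"
    and ev: "eventually (\<lambda>x. norm (f x - c / x) \<le> C * norm (x powr (-1-\<epsilon>))) at_top"
    using asym by (elim landau_o.bigE)
  then obtain M0 where M0: "\<And>x. x \<ge> M0 \<Longrightarrow> norm (f x - c / x) \<le> C * norm (x powr (-1-\<epsilon>))"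
    by (auto simp: eventually_at_top_linorder)
  have "\<bar>f x\<bar> \<le> (\<bar>c\<bar> + C) / x" if x: "x \<ge> max 1 M0" for x
  proof -
    have x1: "x \<ge> 1" using x by simp
    have "\<bar>f x - c / x\<bar> \<le> C * x powr (-1-\<epsilon>)" using M0[of x] x by simp
    also have "\<dots> \<le> C * x powr (-1)" using x1 eps C by (intro mult_left_mono powr_mono) auto
    finally have "\<bar>f x - c / x\<bar> \<le> C / x" using x1 by (simp add: powr_minus divide_inverse)
    then have "\<bar>f x\<bar> \<le> \<bar>c / x\<bar> + C / x" by linarith
    also have "\<bar>c / x\<bar> = \<bar>c\<bar> / x" using x1 by simp
    finally show ?thesis by (simp add: add_divide_distrib)
  qed
  then show thesis by (intro that[of "max 1 M0"]) auto
qed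

text \<open>Near 0 the Mellin integrand is dominated by B t^(-Re w), B a bound of |f| on [0,M].\<close>
lemma mellin_integrable_near_zero:
  fixes f :: "real \<Rightarrow> real"
  assumes cont: "continuous_on {0..} f" and M: "M \<ge> 0" and w: "Re w < 1"
  shows "set_integrable lborel {0<..M} (\<lambda>\<zeta>. complex_of_real (f \<zeta>) * complex_of_real \<zeta> powr (-w))"
proof -
  have "bounded (f ` {0..M})"
    by (rule compact_imp_bounded, rule compact_continuous_image)
       (use cont in \<open>auto intro: continuous_on_subset\<close>)
  then obtain B where B: "\<And>x. x \<in> {0..M} \<Longrightarrow> \<bar>f x\<bar> \<le> B"
    unfolding bounded_iff by (metis atLeastAtMost_iff image_eqI real_norm_def)
  show ?thesis
  proof (rule set_integrable_bound)
    show "set_integrable lborel {0<..M} (\<lambda>x. B * x powr (- Re w))"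
      using powr_set_integrable_near_zero[of "- Re w" M] w M by auto
    show "set_borel_measurable lborel {0<..M} (\<lambda>\<zeta>. complex_of_real (f \<zeta>) * complex_of_real \<zeta> powr (-w))"
      by (rule mellin_integrand_measurable) (use cont in \<open>auto intro: continuous_on_subset\<close>)
    show "AE x in lborel. x \<in> {0<..M} \<longrightarrow>
            norm (complex_of_real (f x) * complex_of_real x powr (-w)) \<le> norm (B * x powr (- Re w))"
      using B by (intro AE_I2)
        (auto simp: norm_mellin_integrand intro!: order_trans[OF mult_right_mono abs_ge_self])
  qed
qed

text \<open>Near infinity, |f t| \<le> K/t makes the Mellin integrand dominated by K t^(-1 - Re w).\<close>
lemma mellin_integrable_at_infinity:
  fixes f :: "real \<Rightarrow> real"
  assumes cont: "continuous_on {0<..} f" and M: "M > 0" and w: "Re w > 0"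
    and bound: "\<And>x. x \<ge> M \<Longrightarrow> \<bar>f x\<bar> \<le> K / x"
  shows "set_integrable lborel {M..} (\<lambda>\<zeta>. complex_of_real (f \<zeta>) * complex_of_real \<zeta> powr (-w))"
proof (rule set_integrable_bound)
  show "set_integrable lborel {M..} (\<lambda>x. K * x powr (-1 - Re w))"
    using powr_set_integrable_at_infinity[of "-1 - Re w" M] w M by auto
  show "set_borel_measurable lborel {M..} (\<lambda>\<zeta>. complex_of_real (f \<zeta>) * complex_of_real \<zeta> powr (-w))"
    by (rule mellin_integrand_measurable[OF cont]) (use M in auto)
  show "AE x in lborel. x \<in> {M..} \<longrightarrow>
          norm (complex_of_real (f x) * complex_of_real x powr (-w)) \<le> norm (K * x powr (-1 - Re w))"
  proof (rule AE_I2, intro impI)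
    fix x assume x: "x \<in> {M..}"
    hence xp: "x > 0" using M by auto
    have "norm (complex_of_real (f x) * complex_of_real x powr (-w)) = \<bar>f x\<bar> * x powr (- Re w)"
      using xp by (rule norm_mellin_integrand)
    also have "\<dots> \<le> (K / x) * x powr (- Re w)" using bound[of x] x by (intro mult_right_mono) auto
    also have "(K / x) * x powr (- Re w) = K * x powr (-1 - Re w)"
      using xp by (simp add: powr_diff powr_minus divide_simps)
    finally show "norm (complex_of_real (f x) * complex_of_real x powr (-w)) \<le> norm (K * x powr (-1 - Re w))"
      by simp
  qed
qed

lemma mellin_integrable:
  fixes f :: "real \<Rightarrow> real"
  assumes cont: "continuous_on {0..} f" and eps: "\<epsilon> \<ge> 0"
    and asym: "(\<lambda>\<zeta>. f \<zeta> - c / \<zeta>) \<in> O[at_top](\<lambda>\<zeta>. \<zeta> powr (-1 - \<epsilon>))"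
    and w: "0 < Re w" "Re w < 1"
  shows "set_integrable lborel {0<..} (\<lambda>\<zeta>. complex_of_real (f \<zeta>) * complex_of_real \<zeta> powr (-w))"
proof -
  obtain K M where M: "M \<ge> 1" and bound: "\<And>x. x \<ge> M \<Longrightarrow> \<bar>f x\<bar> \<le> K / x"
    using reciprocal_bound_from_asymptotics[OF eps asym] by blast
  have cont': "continuous_on {0<..} f" using cont by (rule continuous_on_subset) auto
  have "set_integrable lborel ({0<..M} \<union> {M..})
          (\<lambda>\<zeta>. complex_of_real (f \<zeta>) * complex_of_real \<zeta> powr (-w))"
    by (rule set_integrable_Un[OF mellin_integrable_near_zero[OF cont _ w(2)]
                                  mellin_integrable_at_infinity[OF cont' _ w(1) bound]])
       (use M in auto)
  also have "{0<..M} \<union> {M..} = {0<..}" using M by auto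
  finally show ?thesis .
qed

lemma scaled_exponent_in_strip:
  assumes z: "0 < Re z" "Re z < 1 / real N" and k: "1 \<le> k" "k \<le> N"
  shows "0 < Re (z * of_nat k)" "Re (z * of_nat k) < 1"
proof -
  show "0 < Re (z * of_nat k)" using z k by simp
  have "Re (z * of_nat k) \<le> Re z * real N" using z k by (simp add: mult_left_mono)
  also have "\<dots> < 1" using z k by (simp add: field_simps)
  finally show "Re (z * of_nat k) < 1" .
qed

lemma grafting_integrand_factor:
  assumes F: "phi_forest f z ts (s * \<zeta>) = complex_of_real (s * \<zeta>) powr (- z * of_nat m) * P"
    and s: "s > 0" and \<zeta>: "\<zeta> > 0"
  shows "complex_of_real (f \<zeta>) * complex_of_real (s * \<zeta>) powr (-z) * phi_forest f z ts (s * \<zeta>)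
       = (complex_of_real s powr (- z * of_nat (Suc m)) * P)
         * (complex_of_real (f \<zeta>) * complex_of_real \<zeta> powr (- (z * of_nat (Suc m))))"
proof -
  have "complex_of_real (s * \<zeta>) powr (-z) * complex_of_real (s * \<zeta>) powr (- z * of_nat m)
      = complex_of_real (s * \<zeta>) powr (- z * of_nat (Suc m))"
    by (simp add: powr_add[symmetric] algebra_simps)
  also have "\<dots> = complex_of_real s powr (- z * of_nat (Suc m)) * complex_of_real \<zeta> powr (- z * of_nat (Suc m))"
    using s \<zeta> by (simp only: of_real_mult, intro powr_times_real) auto
  finally show ?thesis unfolding F by (simp add: algebra_simps)
qed

lemma phi_forest_from_trees:
  assumes "\<And>t. t \<in> set w \<Longrightarrow> phi_tree f z t s =
     complex_of_real s powr (- z * of_nat (tree_size t))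
     * (\<Prod>u\<in>#node_subtrees t. mellinF f (z * of_nat (tree_size u)))"
    and s: "s > 0"
  shows "phi_forest f z w s = complex_of_real s powr (- z * of_nat (forest_size w))
           * (\<Prod>t\<in>#forest_node_subtrees w. mellinF f (z * of_nat (tree_size t)))"
  using assms(1)
proof (induction w)
  case Nil
  then show ?case using s by (simp add: phi_forest_def forest_size_def forest_node_subtrees_def)
next
  case (Cons t w)
  then show ?case
    by (simp add: phi_forest_def forest_size_def forest_node_subtrees_def
                  powr_add[symmetric] algebra_simps)
qed

text \<open>The closed formula for trees, by structural induction; here no size bound is needed,
  since both sides are defined through the same (possibly divergent) integrals.\<close>
lemma phi_tree_closed_form:
  assumes "s > 0"
  shows "phi_tree f z t s = complex_of_real s powr (- z * of_nat (tree_size t))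
           * (\<Prod>u\<in>#node_subtrees t. mellinF f (z * of_nat (tree_size u)))"
  using assms
proof (induction t arbitrary: s)
  case (Node ts)
  define m where "m = forest_size ts"
  define P where "P = (\<Prod>t\<in>#forest_node_subtrees ts. mellinF f (z * of_nat (tree_size t)))"
  have F: "phi_forest f z ts r = complex_of_real r powr (- z * of_nat m) * P" if "r > 0" for r
    unfolding m_def P_def by (rule phi_forest_from_trees) (use Node.IH that in auto)
  have "phi_tree f z (Node ts) s = (LINT \<zeta>:{0<..}|lborel.
          complex_of_real (f \<zeta>) * complex_of_real (s * \<zeta>) powr (-z) * phi_forest f z ts (s * \<zeta>))"
    by (simp add: phi_forest_def)
  also have "\<dots> = (LINT \<zeta>:{0<..}|lborel. (complex_of_real s powr (- z * of_nat (Suc m)) * P)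
          * (complex_of_real (f \<zeta>) * complex_of_real \<zeta> powr (- (z * of_nat (Suc m)))))"
  proof (rule set_lebesgue_integral_cong, simp, intro allI impI)
    fix \<zeta> :: real assume "\<zeta> \<in> {0<..}"
    with Node.prems show "complex_of_real (f \<zeta>) * complex_of_real (s * \<zeta>) powr (-z)
        * phi_forest f z ts (s * \<zeta>) = (complex_of_real s powr (- z * of_nat (Suc m)) * P)
        * (complex_of_real (f \<zeta>) * complex_of_real \<zeta> powr (- (z * of_nat (Suc m))))"
      by (intro grafting_integrand_factor F) auto
  qed
  also have "\<dots> = (complex_of_real s powr (- z * of_nat (Suc m)) * P) * mellinF f (z * of_nat (Suc m))"
    by (simp add: mellinF_def)
  finally show ?case
    by (simp add: m_def P_def forest_size_def forest_node_subtrees_def)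
qed

lemma phi_forest_closed_form:
  assumes "s > 0"
  shows "phi_forest f z w s = complex_of_real s powr (- z * of_nat (forest_size w))
           * (\<Prod>t\<in>#forest_node_subtrees w. mellinF f (z * of_nat (tree_size t)))"
  using assms by (intro phi_forest_from_trees phi_tree_closed_form)

theorem mainTheorem2:
  fixes f :: "real \<Rightarrow> real" and c :: real and \<epsilon> :: real and N :: nat and z :: complex
  assumes cont: "continuous_on {0..} f"
    and eps: "\<epsilon> > 0"
    and asym: "(\<lambda>\<zeta>. f \<zeta> - c / \<zeta>) \<in> O[at_top](\<lambda>\<zeta>. \<zeta> powr (-1 - \<epsilon>))"
    and N: "N \<ge> 1"
    and z: "0 < Re z" "Re z < 1 / real N"
  shows "(\<forall>ts s. tree_size (Node ts) \<le> N \<longrightarrow> s > 0 \<longrightarrow>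
            set_integrable lborel {0<..}
              (\<lambda>\<zeta>. complex_of_real (f \<zeta>) * (complex_of_real (s * \<zeta>)) powr (-z)
                     * phi_forest f z ts (s * \<zeta>)))
       \<and> (\<forall>w s. forest_size w \<le> N \<longrightarrow> s > 0 \<longrightarrow>
            phi_forest f z w s =
              complex_of_real s powr (- z * of_nat (forest_size w))
              * (\<Prod>t\<in>#forest_node_subtrees w. mellinF f (z * of_nat (tree_size t))))"
proof (intro conjI allI impI)
  fix ts :: "rtree list" and s :: real
  assume size: "tree_size (Node ts) \<le> N" and s: "s > 0"
  define m where "m = forest_size ts"
  have "Suc m \<le> N" using size by (simp add: m_def forest_size_def)
  note strip = scaled_exponent_in_strip[OF z _ this]
  have "set_integrable lborel {0<..}
          (\<lambda>\<zeta>. (complex_of_real s powr (- z * of_nat (Suc m))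
                 * (\<Prod>t\<in>#forest_node_subtrees ts. mellinF f (z * of_nat (tree_size t))))
               * (complex_of_real (f \<zeta>) * complex_of_real \<zeta> powr (- (z * of_nat (Suc m)))))"
    using eps strip by (intro set_integrable_mult_right mellin_integrable[OF cont _ asym]) auto
  moreover have "complex_of_real (f \<zeta>) * complex_of_real (s * \<zeta>) powr (-z) * phi_forest f z ts (s * \<zeta>)
      = (complex_of_real s powr (- z * of_nat (Suc m))
         * (\<Prod>t\<in>#forest_node_subtrees ts. mellinF f (z * of_nat (tree_size t))))
        * (complex_of_real (f \<zeta>) * complex_of_real \<zeta> powr (- (z * of_nat (Suc m))))"
    if "\<zeta> \<in> {0<..}" for \<zeta>
    using s that unfolding m_def
    by (intro grafting_integrand_factor phi_forest_closed_form) auto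
  ultimately show "set_integrable lborel {0<..}
      (\<lambda>\<zeta>. complex_of_real (f \<zeta>) * complex_of_real (s * \<zeta>) powr (-z) * phi_forest f z ts (s * \<zeta>))"
    by (subst set_integrable_cong[OF refl refl]) auto
qed (rule phi_forest_closed_form)

end
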